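(* Let $(E,p,X)$ and $(F,q,Y)$ be étalé spaces over Boolean spaces and let $\varphi\colon(E,p,X)\to(F,q,Y)$ be a proper continuous relational covering morphism with underlying map $\overline{\varphi}\colon X\to Y$. Then the map $\hat\varphi\colon F^{\ast}\to E^{\ast}$, $x\mapsto\varphi^{-1}(x)$, is well defined and, together with the map $Y^{\ast}\to X^{\ast}$, $U\mapsto\overline{\varphi}^{-1}(U)$, is a morphism of Boolean sets from $\widetilde q\colon F^{\ast}\to Y^{\ast}$ to $\widetilde p\colon E^{\ast}\to X^{\ast}$.
   Context: A Boolean space is a Hausdorff space with a basis of compact-open sets. An étalé space $(E,p,X)$: surjective local homeomorphism $p\colon E\to X$. A local section is an open $A\subseteq E$ on which $p$ is injective. For an étalé space $(E,p,X)$, $X^{\ast}$ is the Boolean algebra of compact-open subsets of $X$, $E^{\ast}$ the set of compact-open local sections, $\widetilde p(C)=p(C)$, and restrictions are $C|^A_B=C\cap p^{-1}(B)$ for compact-open $A\supseteq B$ and $p(C)=A$; this is a Boolean set. A relational morphism $\varphi\colon(E,p,X)\to(F,q,Y)$: a map $\varphi\colon E\to\mathsf P(F)$ and a map $\overline{\varphi}\colon X\to Y$ with $\varphi(e)\subseteq q^{-1}(\overline{\varphi}(p(e)))$. Locally injective: $p(e)=p(e')$ and $\varphi(e)\cap\varphi(e')\neq\emptyset$ imply $e=e'$. Locally surjective: if $y\in F$ and $q(y)=\overline{\varphi}(u)$, $u\in X$, then some $e$ with $p(e)=u$ has $y\in\varphi(e)$. Relational covering morphism: both. $\varphi^{-1}(A)=\{e:\varphi(e)\cap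 A\neq\emptyset\}$; continuous/proper: preimages of open/compact sets are open/compact. Boolean sets and their morphisms: a "Boolean algebra" is a generalized Boolean algebra (relatively complemented distributive lattice with $0$). A Boolean set is a presheaf of sets $p\colon X\to B$ over a Boolean algebra (pairwise disjoint $X_e$, restrictions $x|^e_f$ for $e\ge f$, functorial) with all $X_e\ne\emptyset$, such that under the order $x\le y$ iff $p(x)\le p(y)$ and $x=y|^{p(y)}_{p(x)}$ there is a least element $0$, any $x,y$ with $x\wedge y$ existing and $p(x\wedge y)=p(x)\wedge p(y)$ have a join, and $p(x)=0\Rightarrow x=0$. A morphism of Boolean sets $(X,p,B_1)\to(Y,q,B_2)$ is $\psi\colon X\to Y$ with a Boolean algebra morphism $\overline{\psi}\colon B_1\to B_2$ such that $q\psi=\overline{\psi}p$ and $\psi(x|^a_b)=\psi(x)|^{\overline{\psi}(a)}_{\overline{\psi}(b)}$. *)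

theory Defs
  imports "HOL-Analysis.Analysis"
begin

definition boolean_space :: "'a topology \<Rightarrow> bool" where
  "boolean_space X \<longleftrightarrow> Hausdorff_space X \<and>
     (\<forall>U x. openin X U \<and> x \<in> U \<longrightarrow>
        (\<exists>K. compactin X K \<and> openin X K \<and> x \<in> K \<and> K \<subseteq> U))"

definition local_homeomorphism :: "'e topology \<Rightarrow> 'x topology \<Rightarrow> ('e \<Rightarrow> 'x) \<Rightarrow> bool" where
  "local_homeomorphism E X p \<longleftrightarrow> continuous_map E X p \<and>
     (\<forall>e\<in>topspace E. \<exists>U. openin E U \<and> e \<in> U \<and> openin X (p ` U) \<and>
        homeomorphic_map (subtopology E U) (subtopology X (p ` U)) p)"

definition etale_space :: "'e topology \<Rightarrow> ('e \<Rightarrow> 'x) \<Rightarrow> 'x topology \<Rightarrow> bool" where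
  "etale_space E p X \<longleftrightarrow> local_homeomorphism E X p \<and> p ` topspace E = topspace X"

definition local_section :: "'e topology \<Rightarrow> ('e \<Rightarrow> 'x) \<Rightarrow> 'e set \<Rightarrow> bool" where
  "local_section E p A \<longleftrightarrow> openin E A \<and> inj_on p A"

definition compact_opens :: "'x topology \<Rightarrow> 'x set set" where
  "compact_opens X = {U. compactin X U \<and> openin X U}"

definition co_sections :: "'e topology \<Rightarrow> ('e \<Rightarrow> 'x) \<Rightarrow> 'e set set" where
  "co_sections E p = {C. compactin E C \<and> local_section E p C}"

text \<open>Restriction C|^A_B = C \<inter> p^{-1}(B) (A is p(C), unused).\<close>
definition etale_restr :: "'e topology \<Rightarrow> ('e \<Rightarrow> 'x) \<Rightarrow> 'x set \<Rightarrow> 'x set \<Rightarrow> 'e set \<Rightarrow> 'e set" where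
  "etale_restr E p A B C = C \<inter> {e \<in> topspace E. p e \<in> B}"

definition relational_morphism ::
  "'e topology \<Rightarrow> ('e \<Rightarrow> 'x) \<Rightarrow> 'x topology \<Rightarrow> 'f topology \<Rightarrow> ('f \<Rightarrow> 'y) \<Rightarrow> 'y topology \<Rightarrow>
   ('e \<Rightarrow> 'f set) \<Rightarrow> ('x \<Rightarrow> 'y) \<Rightarrow> bool" where
  "relational_morphism E p X F q Y phi phib \<longleftrightarrow>
     phib \<in> topspace X \<rightarrow> topspace Y \<and>
     (\<forall>e\<in>topspace E. phi e \<subseteq> {y \<in> topspace F. q y = phib (p e)})"

definition locally_injective ::
  "'e topology \<Rightarrow> ('e \<Rightarrow> 'x) \<Rightarrow> ('e \<Rightarrow> 'f set) \<Rightarrow> bool" where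
  "locally_injective E p phi \<longleftrightarrow>
     (\<forall>e\<in>topspace E. \<forall>e'\<in>topspace E. p e = p e' \<and> phi e \<inter> phi e' \<noteq> {} \<longrightarrow> e = e')"

definition locally_surjective ::
  "'e topology \<Rightarrow> ('e \<Rightarrow> 'x) \<Rightarrow> 'x topology \<Rightarrow> 'f topology \<Rightarrow> ('f \<Rightarrow> 'y) \<Rightarrow>
   ('e \<Rightarrow> 'f set) \<Rightarrow> ('x \<Rightarrow> 'y) \<Rightarrow> bool" where
  "locally_surjective E p X F q phi phib \<longleftrightarrow>
     (\<forall>y\<in>topspace F. \<forall>u\<in>topspace X. q y = phib u \<longrightarrow>
        (\<exists>e\<in>topspace E. p e = u \<and> y \<in> phi e))"

definition relational_covering_morphism ::
  "'e topology \<Rightarrow> ('e \<Rightarrow> 'x) \<Rightarrow> 'x topology \<Rightarrow> 'f topology \<Rightarrow> ('f \<Rightarrow> 'y) \<Rightarrow> 'y topology \<Rightarrow>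
   ('e \<Rightarrow> 'f set) \<Rightarrow> ('x \<Rightarrow> 'y) \<Rightarrow> bool" where
  "relational_covering_morphism E p X F q Y phi phib \<longleftrightarrow>
     relational_morphism E p X F q Y phi phib \<and> locally_injective E p phi \<and>
     locally_surjective E p X F q phi phib"

definition rel_preimage :: "'e topology \<Rightarrow> ('e \<Rightarrow> 'f set) \<Rightarrow> 'f set \<Rightarrow> 'e set" where
  "rel_preimage E phi A = {e \<in> topspace E. phi e \<inter> A \<noteq> {}}"

definition rel_continuous :: "'e topology \<Rightarrow> 'f topology \<Rightarrow> ('e \<Rightarrow> 'f set) \<Rightarrow> bool" where
  "rel_continuous E F phi \<longleftrightarrow> (\<forall>A. openin F A \<longrightarrow> openin E (rel_preimage E phi A))"

definition rel_proper :: "'e topology \<Rightarrow> 'f topology \<Rightarrow> ('e \<Rightarrow> 'f set) \<Rightarrow> bool" where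
  "rel_proper E F phi \<longleftrightarrow> (\<forall>A. compactin F A \<longrightarrow> compactin E (rel_preimage E phi A))"

definition ba_hom :: "'a set set \<Rightarrow> 'b set set \<Rightarrow> ('a set \<Rightarrow> 'b set) \<Rightarrow> bool" where
  "ba_hom B1 B2 f \<longleftrightarrow> (\<forall>a\<in>B1. f a \<in> B2) \<and> f {} = {} \<and>
     (\<forall>a\<in>B1. \<forall>b\<in>B1. f (a \<union> b) = f a \<union> f b \<and> f (a \<inter> b) = f a \<inter> f b \<and> f (a - b) = f a - f b)"

text \<open>Morphism of Boolean sets (X1,p1,B1) -> (X2,p2,B2), where r1 a b x = x|^a_b.\<close>
definition bset_morphism ::
  "'s set \<Rightarrow> ('s \<Rightarrow> 'a set) \<Rightarrow> 'a set set \<Rightarrow> ('a set \<Rightarrow> 'a set \<Rightarrow> 's \<Rightarrow> 's) \<Rightarrow>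
   't set \<Rightarrow> ('t \<Rightarrow> 'b set) \<Rightarrow> 'b set set \<Rightarrow> ('b set \<Rightarrow> 'b set \<Rightarrow> 't \<Rightarrow> 't) \<Rightarrow>
   ('s \<Rightarrow> 't) \<Rightarrow> ('a set \<Rightarrow> 'b set) \<Rightarrow> bool" where
  "bset_morphism X1 p1 B1 r1 X2 p2 B2 r2 psi psib \<longleftrightarrow>
     (\<forall>x\<in>X1. psi x \<in> X2) \<and> ba_hom B1 B2 psib \<and>
     (\<forall>x\<in>X1. p2 (psi x) = psib (p1 x)) \<and>
     (\<forall>x\<in>X1. \<forall>a\<in>B1. \<forall>b\<in>B1. p1 x = a \<and> b \<subseteq> a \<longrightarrow>
         psi (r1 a b x) = r2 (psib a) (psib b) (psi x))"

end

theory Submission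
  imports Defs
begin

text \<open>For a compact-open section \<open>C\<close> of \<open>F\<close>, local injectivity makes \<open>\<phi>\<^sup>-\<^sup>1(C)\<close> a section, and
  continuity and properness make it compact-open. Local surjectivity gives
  \<open>p(\<phi>\<^sup>-\<^sup>1(D)) = \<overline>\<phi>\<^sup>-\<^sup>1(q(D))\<close>. Over a Boolean base every compact-open \<open>U\<close> is \<open>q(D)\<close> for a
  compact-open \<open>D\<close> (a finite union of compact-open pieces of local sections), so
  \<open>\<overline>\<phi>\<^sup>-\<^sup>1(U) = p(\<phi>\<^sup>-\<^sup>1(D))\<close> is compact-open, \<open>p\<close> being continuous and open. Compatibility
  with restrictions holds because \<open>\<phi>\<close> lies over \<open>\<overline>\<phi>\<close>.\<close>

lemma local_homeomorphism_open_map: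
  assumes "local_homeomorphism E X p"
  shows "open_map E X p"
  unfolding open_map_def
proof (intro allI impI)
  fix W assume W: "openin E W"
  show "openin X (p ` W)"
  proof (subst openin_subopen, intro ballI)
    fix x assume "x \<in> p ` W"
    then obtain e where e: "e \<in> W" "x = p e" by blast
    then have "e \<in> topspace E" using W openin_subset by blast
    then obtain V where V: "openin E V" "e \<in> V" "openin X (p ` V)"
      "homeomorphic_map (subtopology E V) (subtopology X (p ` V)) p"
      using assms unfolding local_homeomorphism_def by blast
    have "openin (subtopology E V) (W \<inter> V)"
      using W by (auto simp: openin_subtopology)
    then have "openin (subtopology X (p ` V)) (p ` (W \<inter> V))"
      using homeomorphic_imp_open_map[OF V(4)] unfolding open_map_def by blast
    then have "openin X (p ` (W \<inter> V))" using V(3) openin_trans_full by blast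
    then show "\<exists>T. openin X T \<and> x \<in> T \<and> T \<subseteq> p ` W"
      using e V by blast
  qed
qed

lemma local_homeomorphism_compact_open_nbhd:
  assumes lh: "local_homeomorphism F Y q" and bs: "boolean_space Y"
    and U: "openin Y U" and f: "f \<in> topspace F" "q f \<in> U"
  obtains C where "compactin F C" "openin F C" "f \<in> C" "q ` C \<subseteq> U"
proof -
  obtain V where V: "openin F V" "f \<in> V" "openin Y (q ` V)"
    "homeomorphic_map (subtopology F V) (subtopology Y (q ` V)) q"
    using lh f unfolding local_homeomorphism_def by blast
  have cq: "continuous_map F Y q" using lh unfolding local_homeomorphism_def by blast
  have "openin Y (q ` V \<inter> U)" using V U by blast
  then obtain K where K: "compactin Y K" "openin Y K" "q f \<in> K" "K \<subseteq> q ` V \<inter> U"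
    using bs f V unfolding boolean_space_def by blast
  define C where "C = V \<inter> {x \<in> topspace F. q x \<in> K}"
  have "V \<subseteq> topspace F" using V openin_subset by blast
  then have qC: "q ` C = K" using K(4) unfolding C_def by blast
  have "openin F C" unfolding C_def
    using V(1) openin_continuous_map_preimage[OF cq K(2)] by blast
  moreover have "compactin (subtopology Y (q ` V)) (q ` C)"
    using K qC by (simp add: compactin_subtopology)
  then have "compactin (subtopology F V) C"
    using homeomorphic_map_compactness[OF V(4), of C] unfolding C_def by auto
  then have "compactin F C" by (simp add: compactin_subtopology)
  ultimately show ?thesis using that f V(2) K qC unfolding C_def by blast
qed

lemma compact_open_lift:
  assumes lh: "local_homeomorphism F Y q" and bs: "boolean_space Y"
    and U: "compactin Y U" "openin Y U" and onto: "U \<subseteq> q ` topspace F"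
  obtains D where "compactin F D" "openin F D" "q ` D = U"
proof -
  define \<C> where "\<C> = {C. compactin F C \<and> openin F C \<and> q ` C \<subseteq> U}"
  have "U \<subseteq> \<Union> ((`) q ` \<C>)"
  proof
    fix y assume "y \<in> U"
    then obtain f where "f \<in> topspace F" "q f = y" using onto by blast
    then obtain C where "C \<in> \<C>" "f \<in> C"
      using local_homeomorphism_compact_open_nbhd[OF lh bs U(2), of f] \<open>y \<in> U\<close>
      unfolding \<C>_def by blast
    then show "y \<in> \<Union> ((`) q ` \<C>)" using \<open>q f = y\<close> by blast
  qed
  moreover have "\<forall>K\<in>(`) q ` \<C>. openin Y K"
    using local_homeomorphism_open_map[OF lh] unfolding \<C>_def open_map_def by blast
  ultimately obtain \<G> where \<G>: "finite \<G>" "\<G> \<subseteq> (`) q ` \<C>" "U \<subseteq> \<Union>\<G>"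
    using U(1) unfolding compactin_def by meson
  then obtain \<D> where \<D>: "\<D> \<subseteq> \<C>" "finite \<D>" "\<G> = (`) q ` \<D>"
    using finite_subset_image[OF \<G>(1,2)] by blast
  have "compactin F (\<Union>\<D>)"
    using \<D> unfolding \<C>_def by (intro compactin_Union) auto
  moreover have "openin F (\<Union>\<D>)"
    using \<D>(1) unfolding \<C>_def by (intro openin_Union) auto
  moreover have "q ` \<Union>\<D> = U"
  proof
    show "q ` \<Union>\<D> \<subseteq> U" using \<D>(1) unfolding \<C>_def by auto
    show "U \<subseteq> q ` \<Union>\<D>" using \<G>(3) unfolding \<D>(3) by blast
  qed
  ultimately show ?thesis using that by blast
qed

lemma relational_morphism_over:
  assumes "relational_morphism E p X F q Y phi phib" "e \<in> topspace E" "y \<in> phi e"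
  shows "y \<in> topspace F" "q y = phib (p e)"
  using assms unfolding relational_morphism_def by blast+

lemma image_rel_preimage:
  assumes rm: "relational_morphism E p X F q Y phi phib"
    and ls: "locally_surjective E p X F q phi phib"
    and C: "C \<subseteq> topspace F" and ontoE: "p ` topspace E = topspace X"
  shows "p ` rel_preimage E phi C = {x \<in> topspace X. phib x \<in> q ` C}"
proof
  show "p ` rel_preimage E phi C \<subseteq> {x \<in> topspace X. phib x \<in> q ` C}"
  proof
    fix x assume "x \<in> p ` rel_preimage E phi C"
    then obtain e y where e: "e \<in> topspace E" "x = p e" "y \<in> phi e" "y \<in> C"
      unfolding rel_preimage_def by blast
    then have "q y = phib x" using relational_morphism_over(2)[OF rm] by blast
    moreover have "x \<in> topspace X" using e ontoE by blast
    ultimately show "x \<in> {x \<in> topspace X. phib x \<in> q ` C}" using e(4) by force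
  qed
  show "{x \<in> topspace X. phib x \<in> q ` C} \<subseteq> p ` rel_preimage E phi C"
  proof
    fix x assume "x \<in> {x \<in> topspace X. phib x \<in> q ` C}"
    then obtain y where y: "x \<in> topspace X" "y \<in> C" "q y = phib x" by (auto simp: image_iff)
    then have "y \<in> topspace F" using C by blast
    then obtain e where "e \<in> topspace E" "p e = x" "y \<in> phi e"
      using ls y(1,3) unfolding locally_surjective_def by blast
    then show "x \<in> p ` rel_preimage E phi C"
      unfolding rel_preimage_def using y(2) by blast
  qed
qed

lemma rel_preimage_co_sections:
  assumes rm: "relational_morphism E p X F q Y phi phib"
    and li: "locally_injective E p phi"
    and "rel_continuous E F phi" and "rel_proper E F phi"
    and C: "C \<in> co_sections F q"
  shows "rel_preimage E phi C \<in> co_sections E p"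
proof -
  have "inj_on p (rel_preimage E phi C)"
  proof (rule inj_onI)
    fix e e' assume "e \<in> rel_preimage E phi C" "e' \<in> rel_preimage E phi C" and pe: "p e = p e'"
    then obtain y y' where yy: "e \<in> topspace E" "e' \<in> topspace E" "y \<in> phi e" "y \<in> C"
      "y' \<in> phi e'" "y' \<in> C" unfolding rel_preimage_def by blast
    then have "q y = q y'" using relational_morphism_over(2)[OF rm] pe by metis
    then have "y = y'" using C yy unfolding co_sections_def local_section_def inj_on_def by blast
    then show "e = e'" using li yy pe unfolding locally_injective_def by blast
  qed
  moreover have "openin E (rel_preimage E phi C)"
    using assms(3,5) unfolding rel_continuous_def co_sections_def local_section_def by blast
  moreover have "compactin E (rel_preimage E phi C)"
    using assms(4,5) unfolding rel_proper_def co_sections_def by blast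
  ultimately show ?thesis unfolding co_sections_def local_section_def by blast
qed

lemma preimage_compact_opens:
  assumes "etale_space E p X" and F: "etale_space F q Y" and "boolean_space Y"
    and rm: "relational_morphism E p X F q Y phi phib"
    and ls: "locally_surjective E p X F q phi phib"
    and rc: "rel_continuous E F phi" and rp: "rel_proper E F phi"
    and U: "U \<in> compact_opens Y"
  shows "{x \<in> topspace X. phib x \<in> U} \<in> compact_opens X"
proof -
  have lhE: "local_homeomorphism E X p" and ontoE: "p ` topspace E = topspace X"
    and lhF: "local_homeomorphism F Y q" and ontoF: "q ` topspace F = topspace Y"
    using assms(1,2) unfolding etale_space_def by auto
  have "U \<subseteq> q ` topspace F" using U ontoF openin_subset unfolding compact_opens_def by blast
  then obtain D where D: "compactin F D" "openin F D" "q ` D = U"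
    using compact_open_lift[OF lhF assms(3)] U unfolding compact_opens_def by blast
  have pre: "{x \<in> topspace X. phib x \<in> U} = p ` rel_preimage E phi D"
    using image_rel_preimage[OF rm ls openin_subset[OF D(2)] ontoE] D(3) by simp
  have "continuous_map E X p" using lhE unfolding local_homeomorphism_def by blast
  moreover have "compactin E (rel_preimage E phi D)" using rp D(1) unfolding rel_proper_def by blast
  ultimately have "compactin X (p ` rel_preimage E phi D)" by (rule image_compactin[rotated])
  moreover have "openin E (rel_preimage E phi D)" using rc D(2) unfolding rel_continuous_def by blast
  then have "openin X (p ` rel_preimage E phi D)"
    using local_homeomorphism_open_map[OF lhE] unfolding open_map_def by blast
  ultimately show ?thesis unfolding pre compact_opens_def by blast
qed

lemma ba_hom_preimage:
  assumes "\<And>U. U \<in> compact_opens Y \<Longrightarrow> {x \<in> topspace X. f x \<in> U} \<in> compact_opens X"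
  shows "ba_hom (compact_opens Y) (compact_opens X) (\<lambda>U. {x \<in> topspace X. f x \<in> U})"
  unfolding ba_hom_def using assms by blast

lemma rel_preimage_etale_restr:
  assumes rm: "relational_morphism E p X F q Y phi phib" and pX: "p ` topspace E \<subseteq> topspace X"
  shows "rel_preimage E phi (etale_restr F q a b C) =
         etale_restr E p a' {x \<in> topspace X. phib x \<in> b} (rel_preimage E phi C)"
proof (intro equalityI subsetI)
  fix e assume "e \<in> rel_preimage E phi (etale_restr F q a b C)"
  then obtain y where e: "e \<in> topspace E" "y \<in> phi e" "y \<in> C" "q y \<in> b"
    unfolding rel_preimage_def etale_restr_def by blast
  moreover have "p e \<in> topspace X" using e(1) pX by blast
  ultimately show "e \<in> etale_restr E p a' {x \<in> topspace X. phib x \<in> b} (rel_preimage E phi C)"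
    using relational_morphism_over(2)[OF rm e(1,2)]
    unfolding rel_preimage_def etale_restr_def by auto
next
  fix e assume "e \<in> etale_restr E p a' {x \<in> topspace X. phib x \<in> b} (rel_preimage E phi C)"
  then obtain y where e: "e \<in> topspace E" "y \<in> phi e" "y \<in> C" "phib (p e) \<in> b"
    unfolding rel_preimage_def etale_restr_def by blast
  then show "e \<in> rel_preimage E phi (etale_restr F q a b C)"
    using relational_morphism_over[OF rm e(1,2)]
    unfolding rel_preimage_def etale_restr_def by auto
qed

theorem lemma3p10:
  fixes E :: "'e topology" and p :: "'e \<Rightarrow> 'x" and X :: "'x topology"
    and F :: "'f topology" and q :: "'f \<Rightarrow> 'y" and Y :: "'y topology"
    and phi :: "'e \<Rightarrow> 'f set" and phib :: "'x \<Rightarrow> 'y"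
  assumes "etale_space E p X" and "boolean_space X"
    and "etale_space F q Y" and "boolean_space Y"
    and "relational_covering_morphism E p X F q Y phi phib"
    and "rel_continuous E F phi" and "rel_proper E F phi"
  shows "(\<forall>C\<in>co_sections F q. rel_preimage E phi C \<in> co_sections E p) \<and>
         bset_morphism (co_sections F q) (\<lambda>C. q ` C) (compact_opens Y) (etale_restr F q)
                       (co_sections E p) (\<lambda>C. p ` C) (compact_opens X) (etale_restr E p)
                       (rel_preimage E phi) (\<lambda>U. {x \<in> topspace X. phib x \<in> U})"
proof -
  have rm: "relational_morphism E p X F q Y phi phib"
    and li: "locally_injective E p phi" and ls: "locally_surjective E p X F q phi phib"
    using assms(5) unfolding relational_covering_morphism_def by auto
  have ontoE: "p ` topspace E = topspace X" using assms(1) unfolding etale_space_def by blast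
  have sections: "\<forall>C\<in>co_sections F q. rel_preimage E phi C \<in> co_sections E p"
    using rel_preimage_co_sections[OF rm li assms(6,7)] by blast
  have hom: "ba_hom (compact_opens Y) (compact_opens X) (\<lambda>U. {x \<in> topspace X. phib x \<in> U})"
    using preimage_compact_opens[OF assms(1,3,4) rm ls assms(6,7)] by (rule ba_hom_preimage)
  have over: "p ` rel_preimage E phi C = {x \<in> topspace X. phib x \<in> q ` C}"
    if "C \<in> co_sections F q" for C
  proof (rule image_rel_preimage[OF rm ls _ ontoE])
    show "C \<subseteq> topspace F"
      using that compactin_subset_topspace unfolding co_sections_def by blast
  qed
  show ?thesis
    unfolding bset_morphism_def
  proof (intro conjI ballI impI)
    fix C assume "C \<in> co_sections F q"
    then show "p ` rel_preimage E phi C = {x \<in> topspace X. phib x \<in> q ` C}" by (rule over)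
  qed (use sections hom rel_preimage_etale_restr[OF rm equalityD1[OF ontoE]] in blast)+
qed

end
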